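(* Let $\Theta$ be a branch of a tableau of $\mathbf{TAB}_{\mathbf{IB}}$. For every formula of the form $@_i\varphi$ in $\Theta$, at least one of the following holds: (1) it is a quasi-subformula of the root formula of $\Theta$; (2) it is an accessibility formula; (3) it is a quasi-subformula of $@_k\neg\Diamond k$ for some nominal $k$ occurring in $\Theta$.
   Context: Hybrid language: fix disjoint countably infinite sets $\mathbf{Prop}$ (propositional variables) and $\mathbf{Nom}$ (nominals). Formulas: $\varphi ::= p \mid i \mid \neg\varphi \mid \varphi\land\varphi \mid \Diamond\varphi \mid @_i\varphi$ with $p\in\mathbf{Prop}$, $i\in\mathbf{Nom}$; $\Box\varphi$ abbreviates $\neg\Diamond\neg\varphi$. Tableau calculus $\mathbf{TAB}_{\mathbf{IB}}$. A tableau is a well-founded tree whose nodes are formulas of the form $@_i\varphi$; its root is a formula $@_i\varphi$ (the root formula) where $i$ does not occur in $\varphi$. A branch is a maximal path; $\varphi\in\Theta$ means $\varphi$ occurs on branch $\Theta$. Each branch is extended by applying the rules below to its formulas as often as possible, except that no further formula is added to a branch once either (i) every new formula generated by applying any rule already occurs on the branch, or (ii) the branch is closed, i.e. contains $@_i\varphi$ and $@_i\neg\varphi$ for some formula $\varphi$ and nominal $i$. An accessibility formula is a formula $@_i\Diamond j$ added by rule $[\Diamond]$ (with $j$ the new nominal). Rules (premises already on the branch; conclusions added to it): [$\neg\neg$] from $@_i\neg\neg\varphi$ add $@_i\varphi$; [$\land$] from $@_i(\varphi\land\psi)$ add $@_i\varphi$ and $@_i\psi$; [$\neg\land$] from $@_i\neg(\varphi\land\psi)$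 split the branch into one extended by $@_i\neg\varphi$ and one extended by $@_i\neg\psi$; [$\Diamond$] from $@_i\Diamond\varphi$, which is not an accessibility formula, add $@_i\Diamond j$ and $@_j\varphi$ where $j$ is a nominal not occurring on the branch; this rule is applied at most once per formula, and only if $i$ is a quasi-urfather on the branch (defined below); [$\neg\Diamond$] from $@_i\neg\Diamond\varphi$ and $@_i\Diamond j$ add $@_j\neg\varphi$; [$\Box_{sym}$] from $@_i\Box\varphi$ and $@_j\Diamond i$ add $@_j\varphi$; [$@$] from $@_i@_j\varphi$ add $@_j\varphi$; [$\neg@$] from $@_i\neg@_j\varphi$ add $@_j\neg\varphi$; [$Id$] from $@_i\varphi$, which is not an accessibility formula, and $@_i j$ add $@_j\varphi$; [$Ref$] for any nominal $i$ occurring on the branch add $@_i i$; ($\mathcal{I}$) for any nominal $i$ occurring on the branch add $@_i\neg\Diamond i$. Auxiliary notions for a branch $\Theta$. $@_i\varphi$ is a quasi-subformula of $@_j\psi$ if $\varphi$ is a subformula of $\psi$, or $\varphi=\neg\chi$ with $\chi$ a subformula of $\psi$. For a nominal $i$ occurring in $\Theta$, $T^\Theta(i)=\{\varphi \mid @_i\varphi\in\Theta$ and $@_i\varphi$ is a quasi-subformula of the root formula$\}$. Nominals $i,j$ are twins if $T^\Theta(i)=T^\Theta(j)$. $i\prec_\Theta j$ if $j$ was introduced by applying $[\Diamond]$ to a formula $@_i\Diamond\varphi$; $\prec_\Theta^*$ is its reflexive transitive closure. A nominal $i$ is a quasi-urfather on $\Theta$ if there are no twins $j\neq k$ with $j\prec_\Theta^*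 i$ and $k\prec_\Theta^* i$. *)

theory Defs
  imports Main
begin

text \<open>Hybrid formulas. Propositional variables and nominals are both indexed by nat;
  separate constructors make Prop and Nom disjoint countably infinite sets.\<close>
datatype fm = Pro nat | Nom nat | Neg fm | Con fm fm | Dia fm | At nat fm

definition Box :: "fm \<Rightarrow> fm" where
  "Box \<phi> = Neg (Dia (Neg \<phi>))"

fun sub :: "fm \<Rightarrow> fm set" where
  "sub (Pro p) = {Pro p}"
| "sub (Nom i) = {Nom i}"
| "sub (Neg \<phi>) = insert (Neg \<phi>) (sub \<phi>)"
| "sub (Con \<phi> \<psi>) = insert (Con \<phi> \<psi>) (sub \<phi> \<union> sub \<psi>)"
| "sub (Dia \<phi>) = insert (Dia \<phi>) (sub \<phi>)"
| "sub (At i \<phi>) = insert (At i \<phi>) (sub \<phi>)"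

fun noms :: "fm \<Rightarrow> nat set" where
  "noms (Pro p) = {}"
| "noms (Nom i) = {i}"
| "noms (Neg \<phi>) = noms \<phi>"
| "noms (Con \<phi> \<psi>) = noms \<phi> \<union> noms \<psi>"
| "noms (Dia \<phi>) = noms \<phi>"
| "noms (At i \<phi>) = insert i (noms \<phi>)"

text \<open>A tableau formula @_i \<phi> is represented as the pair (i, \<phi>).\<close>
type_synonym tfm = "nat \<times> fm"

text \<open>Quasi-subformula: (i,\<phi>) is a quasi-subformula of (j,\<psi>) iff qsub \<phi> \<psi>.\<close>
definition qsub :: "fm \<Rightarrow> fm \<Rightarrow> bool" where
  "qsub \<phi> \<psi> \<longleftrightarrow> \<phi> \<in> sub \<psi> \<or> (\<exists>\<chi>. \<phi> = Neg \<chi> \<and> \<chi> \<in> sub \<psi>)"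

text \<open>Branch state: the set S of formulas on the branch, together with the record D of
  applications of rule [Dia]: (i, \<phi>, j) \<in> D means [Dia] was applied to @_i Dia \<phi>
  introducing the new nominal j (adding @_i Dia j and @_j \<phi>).\<close>
type_synonym state = "tfm set \<times> (nat \<times> fm \<times> nat) set"

definition nominals :: "tfm set \<Rightarrow> nat set" where
  "nominals S = (\<Union>(i, \<phi>)\<in>S. insert i (noms \<phi>))"

definition closed :: "tfm set \<Rightarrow> bool" where
  "closed S \<longleftrightarrow> (\<exists>i \<phi>. (i, \<phi>) \<in> S \<and> (i, Neg \<phi>) \<in> S)"

definition acc :: "(nat \<times> fm \<times> nat) set \<Rightarrow> tfm set" where
  "acc D = {(i, Dia (Nom j)) | i \<phi> j. (i, \<phi>, j) \<in> D}"

definition T :: "tfm \<Rightarrow> tfm set \<Rightarrow> nat \<Rightarrow> fm set" where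
  "T r S i = {\<phi>. (i, \<phi>) \<in> S \<and> qsub \<phi> (snd r)}"

definition twins :: "tfm \<Rightarrow> tfm set \<Rightarrow> nat \<Rightarrow> nat \<Rightarrow> bool" where
  "twins r S i j \<longleftrightarrow> i \<in> nominals S \<and> j \<in> nominals S \<and> T r S i = T r S j"

definition prec :: "(nat \<times> fm \<times> nat) set \<Rightarrow> nat \<Rightarrow> nat \<Rightarrow> bool" where
  "prec D i j \<longleftrightarrow> (\<exists>\<phi>. (i, \<phi>, j) \<in> D)"

definition quasi_urfather :: "tfm \<Rightarrow> state \<Rightarrow> nat \<Rightarrow> bool" where
  "quasi_urfather r \<Theta> i \<longleftrightarrow>
     \<not> (\<exists>j k. j \<noteq> k \<and> twins r (fst \<Theta>) j k \<and>
            (prec (snd \<Theta>))\<^sup>*\<^sup>* j i \<and> (prec (snd \<Theta>))\<^sup>*\<^sup>* k i)"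

inductive step :: "tfm \<Rightarrow> state \<Rightarrow> state \<Rightarrow> bool" for r where
  NegNeg: "(i, Neg (Neg \<phi>)) \<in> S \<Longrightarrow> step r (S, D) (insert (i, \<phi>) S, D)"
| Conj: "(i, Con \<phi> \<psi>) \<in> S \<Longrightarrow> step r (S, D) (S \<union> {(i, \<phi>), (i, \<psi>)}, D)"
| NegConj1: "(i, Neg (Con \<phi> \<psi>)) \<in> S \<Longrightarrow> step r (S, D) (insert (i, Neg \<phi>) S, D)"
| NegConj2: "(i, Neg (Con \<phi> \<psi>)) \<in> S \<Longrightarrow> step r (S, D) (insert (i, Neg \<psi>) S, D)"
| Diamond: "(i, Dia \<phi>) \<in> S \<Longrightarrow> (i, Dia \<phi>) \<notin> acc D \<Longrightarrow> (\<forall>j'. (i, \<phi>, j') \<notin> D) \<Longrightarrow>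
    quasi_urfather r (S, D) i \<Longrightarrow> j \<notin> nominals S \<Longrightarrow>
    step r (S, D) (S \<union> {(i, Dia (Nom j)), (j, \<phi>)}, insert (i, \<phi>, j) D)"
| NegDiamond: "(i, Neg (Dia \<phi>)) \<in> S \<Longrightarrow> (i, Dia (Nom j)) \<in> S \<Longrightarrow>
    step r (S, D) (insert (j, Neg \<phi>) S, D)"
| BoxSym: "(i, Box \<phi>) \<in> S \<Longrightarrow> (j, Dia (Nom i)) \<in> S \<Longrightarrow>
    step r (S, D) (insert (j, \<phi>) S, D)"
| AtR: "(i, At j \<phi>) \<in> S \<Longrightarrow> step r (S, D) (insert (j, \<phi>) S, D)"
| NegAt: "(i, Neg (At j \<phi>)) \<in> S \<Longrightarrow> step r (S, D) (insert (j, Neg \<phi>) S, D)"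
| Id: "(i, \<phi>) \<in> S \<Longrightarrow> (i, \<phi>) \<notin> acc D \<Longrightarrow> (i, Nom j) \<in> S \<Longrightarrow>
    step r (S, D) (insert (j, \<phi>) S, D)"
| Ref: "i \<in> nominals S \<Longrightarrow> step r (S, D) (insert (i, Nom i) S, D)"
| Irr: "i \<in> nominals S \<Longrightarrow> step r (S, D) (insert (i, Neg (Dia (Nom i))) S, D)"

text \<open>States reachable along a branch from the root: rules are applied only while the
  branch is not closed. Every branch of a tableau (a finite maximal path) is such a state.\<close>
inductive on_branch :: "tfm \<Rightarrow> state \<Rightarrow> bool" for r where
  root: "on_branch r ({r}, {})"
| ext: "on_branch r (S, D) \<Longrightarrow> \<not> closed S \<Longrightarrow> step r (S, D) \<Theta>' \<Longrightarrow> on_branch r \<Theta>'"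

end

theory Submission
  imports Defs
begin

text \<open>The three classes are preserved along a branch. A decomposition rule sends a
  formula to a component of it, and every component of a quasi-subformula of a fixed formula
  is again one; this covers the root formula and the formulas @_k \<not>\<Diamond>k alike. Rule [Id]
  moves a formula to another nominal, which is harmless because it may not be applied to
  accessibility formulas, the only formulas whose class depends on their nominal. [Ref] and
  (I) add quasi-subformulas of @_i \<not>\<Diamond>i, and [Dia] adds an accessibility formula.\<close>

lemma sub_refl: "\<phi> \<in> sub \<phi>"
  by (cases \<phi>) auto

lemma sub_trans: "\<psi> \<in> sub \<phi> \<Longrightarrow> \<chi> \<in> sub \<psi> \<Longrightarrow> \<chi> \<in> sub \<phi>"
  by (induction \<phi>) auto

inductive component :: "fm \<Rightarrow> fm \<Rightarrow> bool" where
  NegNeg: "component (Neg (Neg \<phi>)) \<phi>"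
| Conj1: "component (Con \<phi> \<psi>) \<phi>"
| Conj2: "component (Con \<phi> \<psi>) \<psi>"
| NegConj1: "component (Neg (Con \<phi> \<psi>)) (Neg \<phi>)"
| NegConj2: "component (Neg (Con \<phi> \<psi>)) (Neg \<psi>)"
| Diamond: "component (Dia \<phi>) \<phi>"
| NegDiamond: "component (Neg (Dia \<phi>)) (Neg \<phi>)"
| BoxSym: "component (Box \<phi>) \<phi>"
| AtR: "component (At j \<phi>) \<phi>"
| NegAt: "component (Neg (At j \<phi>)) (Neg \<phi>)"

lemma qsub_component:
  assumes "component \<phi> \<phi>'" and "qsub \<phi> \<psi>"
  shows "qsub \<phi>' \<psi>"
  using assms by cases (auto simp: qsub_def Box_def sub_refl intro: sub_trans)

lemma acc_is_Dia_Nom: "(i, \<phi>) \<in> acc D \<Longrightarrow> \<exists>j. \<phi> = Dia (Nom j)"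
  unfolding acc_def by blast

lemma nominals_mono: "S \<subseteq> S' \<Longrightarrow> nominals S \<subseteq> nominals S'"
  unfolding nominals_def by blast

lemma acc_mono: "D \<subseteq> D' \<Longrightarrow> acc D \<subseteq> acc D'"
  unfolding acc_def by blast

definition admissible :: "fm \<Rightarrow> tfm set \<Rightarrow> (nat \<times> fm \<times> nat) set \<Rightarrow> nat \<Rightarrow> fm \<Rightarrow> bool" where
  "admissible \<phi>0 S D i \<phi> \<longleftrightarrow>
     qsub \<phi> \<phi>0 \<or> (i, \<phi>) \<in> acc D \<or> (\<exists>k \<in> nominals S. qsub \<phi> (Neg (Dia (Nom k))))"

lemma admissible_mono:
  "admissible \<phi>0 S D i \<phi> \<Longrightarrow> S \<subseteq> S' \<Longrightarrow> D \<subseteq> D' \<Longrightarrow> admissible \<phi>0 S' D' i \<phi>"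
  unfolding admissible_def using nominals_mono acc_mono by blast

lemma admissible_transfer:
  assumes "admissible \<phi>0 S D i \<phi>" and "(i, \<phi>) \<notin> acc D" and "\<And>\<psi>. qsub \<phi> \<psi> \<Longrightarrow> qsub \<phi>' \<psi>"
  shows "admissible \<phi>0 S D j \<phi>'"
  using assms unfolding admissible_def by blast

lemma admissible_component:
  assumes "admissible \<phi>0 S D i \<phi>" and "(i, \<phi>) \<notin> acc D" and "component \<phi> \<phi>'"
  shows "admissible \<phi>0 S D j \<phi>'"
  using admissible_transfer[OF assms(1,2)] qsub_component[OF assms(3)] by blast

lemma admissible_component_not_Dia:
  assumes "admissible \<phi>0 S D i \<phi>" and "component \<phi> \<phi>'" and "\<And>\<chi>. \<phi> \<noteq> Dia \<chi>"
  shows "admissible \<phi>0 S D j \<phi>'"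
  using admissible_component[OF assms(1) _ assms(2)] assms(3) acc_is_Dia_Nom by blast

lemma admissible_self_loop:
  assumes "i \<in> nominals S" and "\<phi> = Nom i \<or> \<phi> = Neg (Dia (Nom i))"
  shows "admissible \<phi>0 S D i \<phi>"
  using assms unfolding admissible_def qsub_def by auto

lemma step_extends: "step r (S, D) (S', D') \<Longrightarrow> S \<subseteq> S' \<and> D \<subseteq> D'"
  by (cases rule: step.cases) auto

lemma step_preserves_admissible:
  assumes step: "step r (S, D) (S', D')"
    and adm: "\<And>i \<phi>. (i, \<phi>) \<in> S \<Longrightarrow> admissible \<phi>0 S D i \<phi>"
    and new: "(j, \<psi>) \<in> S'"
  shows "admissible \<phi>0 S' D' j \<psi>"
proof -
  have "admissible \<phi>0 S D' j \<psi>"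
    using step
  proof cases
    case (Diamond i \<phi> j')
    have "D \<subseteq> D'"
      using Diamond by blast
    have "admissible \<phi>0 S D j' \<phi>"
      using adm Diamond admissible_component[OF _ _ component.Diamond] by blast
    moreover have "admissible \<phi>0 S D' i (Dia (Nom j'))"
      using Diamond unfolding admissible_def acc_def by blast
    ultimately show ?thesis
      using new adm Diamond admissible_mono[OF _ subset_refl \<open>D \<subseteq> D'\<close>] by blast
  next
    case (Id i \<phi>)
    then show ?thesis
      using new adm admissible_transfer[of \<phi>0 S D i \<phi> \<phi>] by auto
  qed (use new adm admissible_component_not_Dia admissible_self_loop component.intros
       in \<open>fastforce simp: Box_def\<close>)+
  then show ?thesis
    using admissible_mono step_extends[OF step] by blast
qed

lemma on_branch_admissible:
  assumes "on_branch (i0, \<phi>0) (S, D)" and "(i, \<phi>) \<in> S"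
  shows "admissible \<phi>0 S D i \<phi>"
  using assms
proof (induction "(S, D)" arbitrary: S D i \<phi> rule: on_branch.induct)
  case root
  then show ?case by (simp add: admissible_def qsub_def sub_refl)
next
  case (ext S D)
  then show ?case by (blast intro: step_preserves_admissible)
qed

theorem lemma1:
  fixes i0 :: nat and \<phi>0 :: fm and S :: "tfm set" and D :: "(nat \<times> fm \<times> nat) set"
  assumes "i0 \<notin> noms \<phi>0"
    and "on_branch (i0, \<phi>0) (S, D)"
    and "(i, \<phi>) \<in> S"
  shows "qsub \<phi> \<phi>0 \<or> (i, \<phi>) \<in> acc D \<or> (\<exists>k \<in> nominals S. qsub \<phi> (Neg (Dia (Nom k))))"
  using on_branch_admissible[OF assms(2,3)] unfolding admissible_def .

end
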